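(* Let $M$ be an exact $\mathfrak{K}$-module. The following are equivalent: (1) $M_0\cong\operatorname{im}\alpha_{01}\oplus\operatorname{im}\alpha_{02}$ (i.e. $M_0$ is the internal direct sum of these two subgroups); (2) $\ker\alpha_{01}=\ker N(s_1)$ and $\operatorname{im}\alpha_{10}=\operatorname{im}N(s_1)$; (3) $\ker\alpha_{02}=\ker(1-t_2)$ and $\operatorname{im}\alpha_{20}=\operatorname{im}(1-t_2)$. These equivalent conditions hold if the $\mathfrak{S}$-module $(M_1,s_1)$ is cohomologically trivial or if the $\mathfrak{S}_2$-module $(M_2,s_2,t_2)$ is cohomologically trivial.
   Context: Fix a prime $p$, $N(x)=1+x+\dots+x^{p-1}$, $\mathfrak{S}=\mathbb{Z}[t]/(t^p-1)$, $\mathfrak{S}_2=\mathbb{Z}[s,t]/((1-s)(1-t),N(s)+N(t)-p)$. A $\mathfrak{K}$-module $M$ amounts to $\mathbb{Z}/2$-graded abelian groups $M_0,M_1,M_2$ with homomorphisms $\alpha_{jk}\colon M_k\to M_j$ ($j\neq k$; $\alpha_{12},\alpha_{21}$ grading-reversing, others grading-preserving) with $\alpha_{jk}\alpha_{km}=0$ for $\{j,k,m\}=\{0,1,2\}$ and, for $t_0:=1-\alpha_{02}\alpha_{20}$ on $M_0$, $s_1:=1-\alpha_{12}\alpha_{21}$ on $M_1$, $t_2:=1-\alpha_{20}\alpha_{02}$, $s_2:=1-\alpha_{21}\alpha_{12}$ on $M_2$: $\alpha_{01}\alpha_{10}=N(t_0)$, $\alpha_{10}\alpha_{01}=N(s_1)$,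 $N(t_2)+N(s_2)=p$ (so $(M_2,s_2,t_2)$ is an $\mathfrak{S}_2$-module). $M$ is exact if the cyclic sequences $M_0\xrightarrow{\alpha_{10}}M_1\xrightarrow{\alpha_{21}}M_2\xrightarrow{\alpha_{02}}M_0$ and $M_0\xrightarrow{\alpha_{20}}M_2\xrightarrow{\alpha_{12}}M_1\xrightarrow{\alpha_{01}}M_0$ are exact. An $\mathfrak{S}$-module $(L,t)$ is cohomologically trivial if $\ker(1-t)=\operatorname{im}N(t)$ and $\operatorname{im}(1-t)=\ker N(t)$; an $\mathfrak{S}_2$-module $(L,s,t)$ is cohomologically trivial if $\operatorname{im}(1-t)=\ker(1-s)$ and $\operatorname{im}(1-s)=\ker(1-t)$. *)

theory Defs
  imports "HOL-Computational_Algebra.Primes"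
begin

text \<open>Abelian groups are modelled as types of class ab_group_add (the whole type is the group);
homomorphisms as additive functions; an endomorphism f acts, and polynomial expressions
in f (like N(f) and 1 - f) are evaluated pointwise.\<close>

definition additive :: "('a::ab_group_add \<Rightarrow> 'b::ab_group_add) \<Rightarrow> bool" where
  "additive f \<longleftrightarrow> (\<forall>x y. f (x + y) = f x + f y)"

definition kernel :: "('a \<Rightarrow> 'b::zero) \<Rightarrow> 'a set" where
  "kernel f = {x. f x = 0}"

definition Nop :: "nat \<Rightarrow> ('a::ab_group_add \<Rightarrow> 'a) \<Rightarrow> 'a \<Rightarrow> 'a" where
  "Nop p f x = (\<Sum>i<p. (f ^^ i) x)"

definition one_minus :: "('a::ab_group_add \<Rightarrow> 'a) \<Rightarrow> 'a \<Rightarrow> 'a" where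
  "one_minus f x = x - f x"

definition subgrp :: "'a::ab_group_add set \<Rightarrow> bool" where
  "subgrp A \<longleftrightarrow> 0 \<in> A \<and> (\<forall>x\<in>A. \<forall>y\<in>A. x + y \<in> A) \<and> (\<forall>x\<in>A. - x \<in> A)"

definition internal_direct_sum :: "'a::ab_group_add set \<Rightarrow> 'a set \<Rightarrow> bool" where
  "internal_direct_sum A B \<longleftrightarrow> subgrp A \<and> subgrp B \<and>
     (\<forall>x. \<exists>!uv. fst uv \<in> A \<and> snd uv \<in> B \<and> x = fst uv + snd uv)"

text \<open>A Z/2-grading of an abelian group: the group is the internal direct sum of the
degree-0 part G0 and the degree-1 part G1.\<close>
definition graded :: "'a::ab_group_add set \<Rightarrow> 'a set \<Rightarrow> bool" where
  "graded G0 G1 \<longleftrightarrow> internal_direct_sum G0 G1"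

definition grading_preserving where
  "grading_preserving A0 A1 B0 B1 f \<longleftrightarrow> f ` A0 \<subseteq> B0 \<and> f ` A1 \<subseteq> B1"

definition grading_reversing where
  "grading_reversing A0 A1 B0 B1 f \<longleftrightarrow> f ` A0 \<subseteq> B1 \<and> f ` A1 \<subseteq> B0"

text \<open>A K-module: graded groups M0 (grading A0,A1), M1 (B0,B1), M2 (C0,C1) and maps
a_jk : M_k \<rightarrow> M_j.\<close>
definition K_module ::
  "nat \<Rightarrow> 'a::ab_group_add set \<Rightarrow> 'a set \<Rightarrow> 'b::ab_group_add set \<Rightarrow> 'b set \<Rightarrow> 'c::ab_group_add set \<Rightarrow> 'c set
   \<Rightarrow> ('b \<Rightarrow> 'a) \<Rightarrow> ('c \<Rightarrow> 'a) \<Rightarrow> ('a \<Rightarrow> 'b) \<Rightarrow> ('c \<Rightarrow> 'b) \<Rightarrow> ('a \<Rightarrow> 'c) \<Rightarrow> ('b \<Rightarrow> 'c) \<Rightarrow> bool" where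
  "K_module p A0 A1 B0 B1 C0 C1 a01 a02 a10 a12 a20 a21 \<longleftrightarrow>
     graded A0 A1 \<and> graded B0 B1 \<and> graded C0 C1 \<and>
     additive a01 \<and> additive a02 \<and> additive a10 \<and> additive a12 \<and> additive a20 \<and> additive a21 \<and>
     grading_preserving B0 B1 A0 A1 a01 \<and> grading_preserving A0 A1 B0 B1 a10 \<and>
     grading_preserving C0 C1 A0 A1 a02 \<and> grading_preserving A0 A1 C0 C1 a20 \<and>
     grading_reversing C0 C1 B0 B1 a12 \<and> grading_reversing B0 B1 C0 C1 a21 \<and>
     (\<forall>x. a01 (a12 x) = 0) \<and> (\<forall>x. a02 (a21 x) = 0) \<and>
     (\<forall>x. a10 (a02 x) = 0) \<and> (\<forall>x. a12 (a20 x) = 0) \<and>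
     (\<forall>x. a20 (a01 x) = 0) \<and> (\<forall>x. a21 (a10 x) = 0) \<and>
     (\<forall>x. a01 (a10 x) = Nop p (\<lambda>y. y - a02 (a20 y)) x) \<and>
     (\<forall>x. a10 (a01 x) = Nop p (\<lambda>y. y - a12 (a21 y)) x) \<and>
     (\<forall>x. Nop p (\<lambda>y. y - a20 (a02 y)) x + Nop p (\<lambda>y. y - a21 (a12 y)) x = (\<Sum>i<p. x))"

definition exact_K_module where
  "exact_K_module p A0 A1 B0 B1 C0 C1 a01 a02 a10 a12 a20 a21 \<longleftrightarrow>
     K_module p A0 A1 B0 B1 C0 C1 a01 a02 a10 a12 a20 a21 \<and>
     kernel a21 = range a10 \<and> kernel a02 = range a21 \<and> kernel a10 = range a02 \<and>
     kernel a12 = range a20 \<and> kernel a01 = range a12 \<and> kernel a20 = range a01"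

definition coh_trivial_S :: "nat \<Rightarrow> ('a::ab_group_add \<Rightarrow> 'a) \<Rightarrow> bool" where
  "coh_trivial_S p t \<longleftrightarrow> kernel (one_minus t) = range (Nop p t) \<and>
                          range (one_minus t) = kernel (Nop p t)"

definition coh_trivial_S2 :: "('a::ab_group_add \<Rightarrow> 'a) \<Rightarrow> ('a \<Rightarrow> 'a) \<Rightarrow> bool" where
  "coh_trivial_S2 s t \<longleftrightarrow> range (one_minus t) = kernel (one_minus s) \<and>
                          range (one_minus s) = kernel (one_minus t)"

end

theory Submission
  imports Defs
begin

text \<open>For additive maps \<open>g : X \<rightarrow> Y\<close> and \<open>f : Y \<rightarrow> Z\<close>, the two equalities
\<open>ker g = ker (f g)\<close> and \<open>im f = im (f g)\<close> say precisely that \<open>Y = im g \<oplus> ker f\<close>.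
In an exact K-module we have \<open>N(s\<^sub>1) = \<alpha>\<^sub>1\<^sub>0 \<alpha>\<^sub>0\<^sub>1\<close> and \<open>1 - t\<^sub>2 = \<alpha>\<^sub>2\<^sub>0 \<alpha>\<^sub>0\<^sub>2\<close>, while exactness
at \<open>M\<^sub>0\<close> gives \<open>ker \<alpha>\<^sub>1\<^sub>0 = im \<alpha>\<^sub>0\<^sub>2\<close> and \<open>ker \<alpha>\<^sub>2\<^sub>0 = im \<alpha>\<^sub>0\<^sub>1\<close>; so conditions (2) and (3) both
say \<open>M\<^sub>0 = im \<alpha>\<^sub>0\<^sub>1 \<oplus> im \<alpha>\<^sub>0\<^sub>2\<close>. Cohomological triviality of \<open>M\<^sub>1\<close> (of \<open>M\<^sub>2\<close>) is exactness of the
pair of endomorphisms \<open>\<alpha>\<^sub>1\<^sub>0 \<alpha>\<^sub>0\<^sub>1\<close>, \<open>\<alpha>\<^sub>1\<^sub>2 \<alpha>\<^sub>2\<^sub>1\<close> (\<open>\<alpha>\<^sub>2\<^sub>0 \<alpha>\<^sub>0\<^sub>2\<close>, \<open>\<alpha>\<^sub>2\<^sub>1 \<alpha>\<^sub>1\<^sub>2\<close>), and together with the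
relations \<open>\<alpha>\<^sub>0\<^sub>1 \<alpha>\<^sub>1\<^sub>2 = 0\<close>, \<open>\<alpha>\<^sub>2\<^sub>1 \<alpha>\<^sub>1\<^sub>0 = 0\<close> (\<open>\<alpha>\<^sub>0\<^sub>2 \<alpha>\<^sub>2\<^sub>1 = 0\<close>, \<open>\<alpha>\<^sub>1\<^sub>2 \<alpha>\<^sub>2\<^sub>0 = 0\<close>) this forces
condition (2) (condition (3)).\<close>

lemma additive_zero: "additive f \<Longrightarrow> f 0 = 0"
  unfolding additive_def by (metis add_cancel_left_right)

lemma additive_diff: "additive f \<Longrightarrow> f (x - y) = f x - f y"
  unfolding additive_def by (metis eq_diff_eq)

lemma additive_uminus: "additive f \<Longrightarrow> f (- x) = - f x"
  using additive_diff[of f 0 x] additive_zero[of f] by simp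

lemma subgrp_range: "additive f \<Longrightarrow> subgrp (range f)"
proof -
  assume f: "additive f"
  have "f u + f v = f (u + v)" "- f u = f (- u)" for u v
    using f by (simp_all add: additive_def additive_uminus)
  then have "f 0 \<in> range f" "f u + f v \<in> range f" "- f u \<in> range f" for u v
    by simp_all
  then show ?thesis unfolding subgrp_def additive_zero[OF f] by blast
qed

lemma subgrp_kernel: "additive f \<Longrightarrow> subgrp (kernel f)"
  unfolding subgrp_def kernel_def
  by (simp add: additive_def additive_uminus additive_zero)

lemma internal_direct_sum_iff:
  assumes "subgrp A" "subgrp B"
  shows "internal_direct_sum A B \<longleftrightarrow> A \<inter> B \<subseteq> {0} \<and> (\<forall>x. \<exists>a\<in>A. \<exists>b\<in>B. x = a + b)"
proof
  assume "internal_direct_sum A B"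
  then have unique: "\<forall>x. \<exists>!uv. fst uv \<in> A \<and> snd uv \<in> B \<and> x = fst uv + snd uv"
    by (simp add: internal_direct_sum_def)
  have "z = 0" if "z \<in> A" "z \<in> B" for z
  proof -
    have "0 \<in> A" "0 \<in> B" using assms by (auto simp: subgrp_def)
    then have "(z, 0) = (0, z)"
      using unique[rule_format, of z] that by (metis add_0 add.right_neutral fst_conv snd_conv)
    then show "z = 0" by simp
  qed
  moreover have "\<forall>x. \<exists>a\<in>A. \<exists>b\<in>B. x = a + b" using unique by metis
  ultimately show "A \<inter> B \<subseteq> {0} \<and> (\<forall>x. \<exists>a\<in>A. \<exists>b\<in>B. x = a + b)" by blast
next
  assume trivial_meet: "A \<inter> B \<subseteq> {0} \<and> (\<forall>x. \<exists>a\<in>A. \<exists>b\<in>B. x = a + b)"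
  have "\<exists>!uv. fst uv \<in> A \<and> snd uv \<in> B \<and> x = fst uv + snd uv" for x
  proof -
    obtain a b where ab: "a \<in> A" "b \<in> B" "x = a + b" using trivial_meet by blast
    show ?thesis
    proof (rule ex1I[of _ "(a, b)"])
      fix uv assume uv: "fst uv \<in> A \<and> snd uv \<in> B \<and> x = fst uv + snd uv"
      have "a + - fst uv \<in> A" "snd uv + - b \<in> B"
        using assms ab uv unfolding subgrp_def by blast+
      moreover have "a + - fst uv = snd uv + - b" using ab uv by (simp add: algebra_simps)
      ultimately have "a + - fst uv = 0" "snd uv + - b = 0" using trivial_meet by auto
      then show "uv = (a, b)" by (metis prod.collapse add.inverse_unique minus_minus)
    qed (use ab in simp)
  qed
  then show "internal_direct_sum A B" using assms by (simp add: internal_direct_sum_def)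
qed

lemma internal_direct_sum_commute:
  assumes "subgrp A" "subgrp B"
  shows "internal_direct_sum A B \<longleftrightarrow> internal_direct_sum B A"
  unfolding internal_direct_sum_iff[OF assms] internal_direct_sum_iff[OF assms(2,1)]
  by (metis Int_commute add.commute)

lemma kernel_comp_eq_iff:
  assumes "additive f" "additive g"
  shows "kernel g = kernel (f \<circ> g) \<longleftrightarrow> range g \<inter> kernel f \<subseteq> {0}"
  using additive_zero[OF assms(1)] additive_zero[OF assms(2)]
  unfolding kernel_def by auto

lemma range_comp_eq_iff:
  assumes "additive f"
  shows "range f = range (f \<circ> g) \<longleftrightarrow> (\<forall>x. \<exists>u\<in>range g. \<exists>v\<in>kernel f. x = u + v)"
proof
  assume range_eq: "range f = range (f \<circ> g)"
  show "\<forall>x. \<exists>u\<in>range g. \<exists>v\<in>kernel f. x = u + v"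
  proof
    fix x
    obtain y where "f x = f (g y)" using range_eq by (metis comp_apply rangeE rangeI)
    then have "f (x - g y) = 0" using additive_diff[OF assms] by simp
    then show "\<exists>u\<in>range g. \<exists>v\<in>kernel f. x = u + v"
      by (intro bexI[of _ "g y"] bexI[of _ "x - g y"]) (auto simp: kernel_def)
  qed
next
  assume decomp: "\<forall>x. \<exists>u\<in>range g. \<exists>v\<in>kernel f. x = u + v"
  have "f x \<in> range (f \<circ> g)" for x
  proof -
    obtain y v where "v \<in> kernel f" "x = g y + v" using decomp by blast
    then have "f x = f (g y)" using assms by (simp add: additive_def kernel_def)
    then show ?thesis by simp
  qed
  then show "range f = range (f \<circ> g)" by auto
qed

lemma internal_direct_sum_range_kernel_iff:
  assumes "additive f" "additive g"
  shows "internal_direct_sum (range g) (kernel f) \<longleftrightarrow>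
           kernel g = kernel (f \<circ> g) \<and> range f = range (f \<circ> g)"
  unfolding internal_direct_sum_iff[OF subgrp_range[OF assms(2)] subgrp_kernel[OF assms(1)]]
    kernel_comp_eq_iff[OF assms] range_comp_eq_iff[OF assms(1)] ..

lemma kernel_range_comp_eq_if_exact:
  assumes "f 0 = 0" "h 0 = 0"
    and "range h \<subseteq> kernel g" "range f \<subseteq> kernel k"
    and "range (h \<circ> k) = kernel (f \<circ> g)" "kernel (h \<circ> k) = range (f \<circ> g)"
  shows "kernel g = kernel (f \<circ> g) \<and> range f = range (f \<circ> g)"
proof
  have "kernel (f \<circ> g) \<subseteq> kernel g"
  proof
    fix x assume "x \<in> kernel (f \<circ> g)"
    then obtain y where "x = h (k y)" using assms(5) by (metis comp_apply rangeE)
    then show "x \<in> kernel g" using assms(3) by blast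
  qed
  then show "kernel g = kernel (f \<circ> g)" using assms(1) by (auto simp: kernel_def)
  have "range f \<subseteq> range (f \<circ> g)"
  proof
    fix y assume "y \<in> range f"
    then have "(h \<circ> k) y = 0" using assms(2,4) by (auto simp: kernel_def)
    then show "y \<in> range (f \<circ> g)" using assms(6) unfolding kernel_def by blast
  qed
  then show "range f = range (f \<circ> g)" by auto
qed

theorem lemma7p9:
  fixes p :: nat
    and A0 A1 :: "'a::ab_group_add set" and B0 B1 :: "'b::ab_group_add set"
    and C0 C1 :: "'c::ab_group_add set"
    and a01 :: "'b \<Rightarrow> 'a" and a02 :: "'c \<Rightarrow> 'a" and a10 :: "'a \<Rightarrow> 'b"
    and a12 :: "'c \<Rightarrow> 'b" and a20 :: "'a \<Rightarrow> 'c" and a21 :: "'b \<Rightarrow> 'c"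
  assumes "prime p"
    and "exact_K_module p A0 A1 B0 B1 C0 C1 a01 a02 a10 a12 a20 a21"
  defines "s1 \<equiv> (\<lambda>y. y - a12 (a21 y))"
    and "s2 \<equiv> (\<lambda>y. y - a21 (a12 y))"
    and "t2 \<equiv> (\<lambda>y. y - a20 (a02 y))"
  shows "(internal_direct_sum (range a01) (range a02) \<longleftrightarrow>
            (kernel a01 = kernel (Nop p s1) \<and> range a10 = range (Nop p s1)))
       \<and> ((kernel a01 = kernel (Nop p s1) \<and> range a10 = range (Nop p s1)) \<longleftrightarrow>
            (kernel a02 = kernel (one_minus t2) \<and> range a20 = range (one_minus t2)))
       \<and> ((coh_trivial_S p s1 \<or> coh_trivial_S2 s2 t2) \<longrightarrow>
            internal_direct_sum (range a01) (range a02))"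
proof -
  have K: "K_module p A0 A1 B0 B1 C0 C1 a01 a02 a10 a12 a20 a21"
    and exact_at_M0: "kernel a10 = range a02" "kernel a20 = range a01"
    using assms(2) by (auto simp: exact_K_module_def)
  have additive: "additive a01" "additive a02" "additive a10" "additive a12" "additive a20" "additive a21"
    using K by (auto simp: K_module_def)
  have complex: "range a12 \<subseteq> kernel a01" "range a10 \<subseteq> kernel a21"
      "range a21 \<subseteq> kernel a02" "range a20 \<subseteq> kernel a12"
    using K by (auto simp: K_module_def kernel_def)
  have N_s1: "Nop p s1 = a10 \<circ> a01" and one_minus_t2: "one_minus t2 = a20 \<circ> a02"
    and one_minus_s1: "one_minus s1 = a12 \<circ> a21" and one_minus_s2: "one_minus s2 = a21 \<circ> a12"
    using K by (auto simp: K_module_def s1_def s2_def t2_def one_minus_def)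
  have cond2: "(kernel a01 = kernel (Nop p s1) \<and> range a10 = range (Nop p s1)) \<longleftrightarrow>
      internal_direct_sum (range a01) (range a02)"
    using internal_direct_sum_range_kernel_iff[OF additive(3,1)] by (simp add: N_s1 exact_at_M0)
  have cond3: "(kernel a02 = kernel (one_minus t2) \<and> range a20 = range (one_minus t2)) \<longleftrightarrow>
      internal_direct_sum (range a01) (range a02)"
    using internal_direct_sum_range_kernel_iff[OF additive(5,2)]
      internal_direct_sum_commute[OF subgrp_range[OF additive(1)] subgrp_range[OF additive(2)]]
    by (simp add: one_minus_t2 exact_at_M0)
  have "coh_trivial_S p s1 \<Longrightarrow> kernel a01 = kernel (Nop p s1) \<and> range a10 = range (Nop p s1)"
    unfolding coh_trivial_S_def N_s1 one_minus_s1
    by (rule kernel_range_comp_eq_if_exact[OF additive_zero[OF additive(3)]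
          additive_zero[OF additive(4)] complex(1,2)]) auto
  moreover have "coh_trivial_S2 s2 t2 \<Longrightarrow>
      kernel a02 = kernel (one_minus t2) \<and> range a20 = range (one_minus t2)"
    unfolding coh_trivial_S2_def one_minus_t2 one_minus_s2
    by (rule kernel_range_comp_eq_if_exact[OF additive_zero[OF additive(5)]
          additive_zero[OF additive(6)] complex(3,4)]) auto
  ultimately show ?thesis using cond2 cond3 by blast
qed

end
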